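(* Let $\{x_k\}_{k\ge 0}$ be a log-convex sequence and define $z_n=\sum_{k=0}^{n}c(n,k)x_k$ for $n\ge 0$. Then $\{z_n\}_{n\ge 0}$ is log-convex.
   Context: $c(n,k)$ denotes the signless Stirling number of the first kind: the number of permutations of $\{1,\dots,n\}$ with exactly $k$ cycles, with $c(0,0)=1$ and $c(n,k)=0$ unless $0\le k\le n$. A sequence $a_0,a_1,\ldots$ of nonnegative real numbers is log-convex if $a_{k-1}a_{k+1}\ge a_k^2$ for all $k\ge 1$. *)

theory Defs
  imports Complex_Main "HOL-Combinatorics.Stirling"
begin

definition log_convex :: "(nat \<Rightarrow> real) \<Rightarrow> bool" where
  "log_convex a \<longleftrightarrow> (\<forall>k. a k \<ge> 0) \<and> (\<forall>k\<ge>1. a (k - 1) * a (k + 1) \<ge> (a k)\<^sup>2)"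

end

theory Submission
  imports Defs
begin

text \<open>
  Put S n j = \<Sum>k\<le>n. c(n,k) x(k+j), so that z n = S n 0. The recurrence
  c(n+1,k+1) = n c(n,k+1) + c(n,k) gives S (n+1) j = n S n j + S n (j+1). Log-convexity of a
  sequence is preserved by sums, nonnegative multiples and shifts, so by induction on n every
  row j \<mapsto> S n j is log-convex. With a, b, d the entries S m 0, S m 1, S m 2, the
  recurrence yields z m z (m+2) - z (m+1)^2 = m a^2 + a b + (a d - b^2) \<ge> 0.
\<close>

lemma log_convex_iff:
  "log_convex a \<longleftrightarrow> (\<forall>k. 0 \<le> a k) \<and> (\<forall>k. (a (Suc k))\<^sup>2 \<le> a k * a (Suc (Suc k)))"
  unfolding log_convex_def
proof (intro iffI conjI allI impI; elim conjE)
  fix k assume "\<forall>k\<ge>1. (a k)\<^sup>2 \<le> a (k - 1) * a (k + 1)"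
  then show "(a (Suc k))\<^sup>2 \<le> a k * a (Suc (Suc k))" by (metis Suc_eq_plus1 diff_Suc_1 le_add2)
next
  fix k :: nat assume "\<forall>k. (a (Suc k))\<^sup>2 \<le> a k * a (Suc (Suc k))" "1 \<le> k"
  then show "(a k)\<^sup>2 \<le> a (k - 1) * a (k + 1)" by (cases k) auto
qed auto

lemma log_convex_add:
  assumes "log_convex a" "log_convex b"
  shows "log_convex (\<lambda>k. a k + b k)"
  unfolding log_convex_iff
proof (intro conjI allI)
  fix k
  show "0 \<le> a k + b k" using assms by (simp add: log_convex_def)
  let ?p = "a k * b (Suc (Suc k))" and ?q = "b k * a (Suc (Suc k))"
  have a: "(a (Suc k))\<^sup>2 \<le> a k * a (Suc (Suc k))" "\<And>i. 0 \<le> a i"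
    using assms(1) by (auto simp: log_convex_iff)
  have b: "(b (Suc k))\<^sup>2 \<le> b k * b (Suc (Suc k))" "\<And>i. 0 \<le> b i"
    using assms(2) by (auto simp: log_convex_iff)
  have "(a (Suc k) * b (Suc k))\<^sup>2 \<le> ?p * ?q"
    using mult_mono[OF a(1) b(1)] a(2) b(2) by (simp add: power_mult_distrib algebra_simps)
  then have "a (Suc k) * b (Suc k) \<le> sqrt (?p * ?q)"
    using real_le_rsqrt by blast
  also have "\<dots> \<le> (?p + ?q) / 2"
    using a(2) b(2) by (intro arith_geo_mean_sqrt) auto
  finally have "2 * (a (Suc k) * b (Suc k)) \<le> ?p + ?q" by simp
  then show "(a (Suc k) + b (Suc k))\<^sup>2 \<le> (a k + b k) * (a (Suc (Suc k)) + b (Suc (Suc k)))"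
    using a(1) b(1) by (simp add: power2_sum algebra_simps)
qed

lemma log_convex_scale:
  assumes "log_convex a" "0 \<le> c"
  shows "log_convex (\<lambda>k. c * a k)"
  unfolding log_convex_iff
proof (intro conjI allI)
  fix k
  show "0 \<le> c * a k"
    using assms by (simp add: log_convex_def)
  have "(c * a (Suc k))\<^sup>2 = c\<^sup>2 * (a (Suc k))\<^sup>2"
    by (simp add: power_mult_distrib)
  also have "\<dots> \<le> c\<^sup>2 * (a k * a (Suc (Suc k)))"
    using assms(1) by (intro mult_left_mono) (auto simp: log_convex_iff)
  also have "\<dots> = c * a k * (c * a (Suc (Suc k)))"
    by (simp add: power2_eq_square algebra_simps)
  finally show "(c * a (Suc k))\<^sup>2 \<le> c * a k * (c * a (Suc (Suc k)))" .
qed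

lemma log_convex_shift:
  assumes "log_convex a"
  shows "log_convex (\<lambda>k. a (Suc k))"
  using assms by (simp add: log_convex_iff)

definition stirling_sum :: "(nat \<Rightarrow> real) \<Rightarrow> nat \<Rightarrow> nat \<Rightarrow> real" where
  "stirling_sum x n j = (\<Sum>k\<le>n. real (stirling n k) * x (k + j))"

lemma stirling_sum_0 [simp]: "stirling_sum x 0 = x"
  by (simp add: stirling_sum_def fun_eq_iff)

lemma stirling_sum_Suc:
  "stirling_sum x (Suc n) j = real n * stirling_sum x n j + stirling_sum x n (Suc j)"
proof -
  have n_stirling_0: "real n * real (stirling n 0) = 0"
    by (cases n) simp_all
  have "stirling_sum x n j = real (stirling n 0) * x j
      + (\<Sum>k\<le>n. real (stirling n (Suc k)) * x (Suc k + j))"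
  proof -
    have "stirling_sum x n j = (\<Sum>k\<le>Suc n. real (stirling n k) * x (k + j))"
      by (simp add: stirling_sum_def)
    then show ?thesis
      by (simp only: sum.atMost_Suc_shift) simp
  qed
  then have "real n * stirling_sum x n j = real n * (\<Sum>k\<le>n. real (stirling n (Suc k)) * x (Suc k + j))"
    using n_stirling_0 by (auto simp: algebra_simps)
  moreover have "stirling_sum x (Suc n) j
      = (\<Sum>k\<le>n. real n * real (stirling n (Suc k)) * x (Suc k + j)
          + real (stirling n k) * x (k + Suc j))"
    unfolding stirling_sum_def by (subst sum.atMost_Suc_shift) (simp add: algebra_simps)
  ultimately show ?thesis
    by (simp add: stirling_sum_def sum.distrib sum_distrib_left mult.assoc)
qed

lemma log_convex_stirling_sum:
  assumes "log_convex x"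
  shows "log_convex (stirling_sum x n)"
proof (induction n)
  case 0
  from assms show ?case by simp
next
  case (Suc n)
  then show ?case
    by (simp add: stirling_sum_Suc log_convex_add log_convex_scale log_convex_shift)
qed

lemma log_convex_stirling_sum_0:
  assumes "log_convex x"
  shows "log_convex (\<lambda>n. stirling_sum x n 0)"
  unfolding log_convex_iff
proof (intro conjI allI)
  fix m
  have lc: "log_convex (stirling_sum x m)"
    using assms by (rule log_convex_stirling_sum)
  show "0 \<le> stirling_sum x m 0"
    using lc by (simp add: log_convex_def)
  define a b d where "a = stirling_sum x m 0" and "b = stirling_sum x m 1" and "d = stirling_sum x m 2"
  have "0 \<le> a" "0 \<le> b" "b\<^sup>2 \<le> a * d"
    using lc unfolding a_def b_def d_def log_convex_iff by (auto simp: numeral_2_eq_2)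
  have z1: "stirling_sum x (Suc m) 0 = real m * a + b"
    by (simp add: stirling_sum_Suc a_def b_def)
  have z2: "stirling_sum x (Suc (Suc m)) 0 = real (Suc m) * (real m * a + b) + (real m * b + d)"
    by (simp add: stirling_sum_Suc a_def b_def d_def numeral_2_eq_2)
  have "stirling_sum x m 0 * stirling_sum x (Suc (Suc m)) 0 - (stirling_sum x (Suc m) 0)\<^sup>2
      = real m * a\<^sup>2 + a * b + (a * d - b\<^sup>2)"
    unfolding z1 z2 a_def[symmetric] by (simp add: power2_eq_square algebra_simps)
  also have "\<dots> \<ge> 0"
    using \<open>0 \<le> a\<close> \<open>0 \<le> b\<close> \<open>b\<^sup>2 \<le> a * d\<close> by simp
  finally show "(stirling_sum x (Suc m) 0)\<^sup>2 \<le> stirling_sum x m 0 * stirling_sum x (Suc (Suc m)) 0"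
    by simp
qed

theorem mainTheorem3:
  fixes x :: "nat \<Rightarrow> real"
  assumes "log_convex x"
  shows "log_convex (\<lambda>n. \<Sum>k=0..n. real (stirling n k) * x k)"
proof -
  have "(\<lambda>n. \<Sum>k=0..n. real (stirling n k) * x k) = (\<lambda>n. stirling_sum x n 0)"
    by (simp add: stirling_sum_def atLeast0AtMost)
  with assms show ?thesis
    by (simp add: log_convex_stirling_sum_0)
qed

end
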